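(* For real $0\le x<1$ and every integer $r\ge2$, $$\log\mathcal C_r\left(\frac x2\right)=-\frac{1}{2^r}\int_0^x \pi t^{r-1}\tan\left(\frac{\pi t}{2}\right)dt.$$
   Context: For an integer $r\ge2$ let $P_r(y)=(1-y)\exp\left(y+\frac{y^2}{2}+\cdots+\frac{y^r}{r}\right)$. For real $|x|<\tfrac12$, the Kurokawa–Koyama multiple cosine function of order $r$ is the convergent positive product $\mathcal C_r(x)=\prod_{n\ge1,\ n\text{ odd}}\left\{P_r\left(\frac{x}{n/2}\right)P_r\left(-\frac{x}{n/2}\right)^{(-1)^{r-1}}\right\}^{(n/2)^{r-1}}$, and $\log$ denotes the real logarithm. *)

theory Defs
  imports "HOL-Analysis.Analysis"
begin

definition Pfac :: "nat \<Rightarrow> real \<Rightarrow> real" where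
  "Pfac r y = (1 - y) * exp (\<Sum>k=1..r. y ^ k / real k)"

definition mcos :: "nat \<Rightarrow> real \<Rightarrow> real" where
  "mcos r x = (\<Prod>k. (Pfac r (x / (real (2*k+1) / 2)) *
        (Pfac r (- x / (real (2*k+1) / 2)) powr ((-1) ^ (r - 1))))
        powr ((real (2*k+1) / 2) ^ (r - 1)))"

end

theory Submission
  imports Defs
begin

text \<open>
  Write the \<open>k\<close>-th factor of \<open>C\<^sub>r(x/2)\<close> as \<open>exp (g\<^sub>k x)\<close> with \<open>g\<^sub>k 0 = 0\<close>. Because \<open>P\<^sub>r\<close> is a
  Weierstrass primary factor, \<open>g\<^sub>k' x = -(1/2^r) x^(r-1) 4x/((2k+1)^2 - x^2)\<close>, and these
  derivatives are dominated by \<open>C/(k+1)^2\<close> uniformly on \<open>|x| < b < 1\<close>. So \<open>ln C\<^sub>r(x/2) = \<Sum> g\<^sub>k x\<close>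
  may be differentiated termwise, and the partial fraction expansion
  \<open>pi tan (pi x/2) = \<Sum> 4x/((2k+1)^2 - x^2)\<close> -- the logarithmic derivative of Euler's product
  \<open>cos (pi x/2) = \<Prod> (1 - x^2/(2k+1)^2)\<close> -- identifies the derivative with
  \<open>-(1/2^r) pi x^(r-1) tan (pi x/2)\<close>. Integrating from \<open>0\<close> gives the formula.
\<close>

lemma prod_atLeast1_atMost_even_odd:
  fixes g :: "nat \<Rightarrow> 'a::comm_monoid_mult"
  shows "(\<Prod>j=1..2*N. g j) = (\<Prod>j=1..N. g (2*j)) * (\<Prod>k<N. g (2*k+1))"
proof (induction N)
  case (Suc N)
  have "{1..2 * Suc N} = insert (2*N+2) (insert (2*N+1) {1..2*N})" by auto
  then show ?case using Suc by (simp add: prod.atLeast1_atMost_eq mult_ac)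
qed simp

text \<open>Euler's product for the cosine, obtained from the sine product at \<open>t\<close> and \<open>t/2\<close>
  by cancelling the even-indexed factors.\<close>
lemma cos_product_formula_real:
  fixes t :: real
  assumes "\<bar>t\<bar> < 2"
  shows "(\<lambda>N. \<Prod>k<N. 1 - t^2 / (real (2*k+1))^2) \<longlonglongrightarrow> cos (pi * t / 2)"
proof (cases "t = 0")
  case False
  define P where "P N = (\<Prod>j=1..N. 1 - (t/2)^2 / (real j)^2)" for N
  have sin_lim: "(\<lambda>N. \<Prod>j=1..2*N. 1 - t^2 / (real j)^2) \<longlonglongrightarrow> sin (pi * t) / (pi * t)"
    using LIMSEQ_subseq_LIMSEQ[OF sin_product_formula_real'[OF False], of "\<lambda>N. 2*N"]
    by (auto simp: strict_mono_def comp_def)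
  have sin_half_lim: "P \<longlonglongrightarrow> sin (pi * (t/2)) / (pi * (t/2))"
    unfolding P_def using sin_product_formula_real'[of "t/2"] False by simp
  have P_pos: "0 < P N" for N
    unfolding P_def
  proof (intro prod_pos)
    fix j assume j: "j \<in> {1..N}"
    then have "1 \<le> (real j)^2" by simp
    moreover have "(t/2)^2 < 1" using assms by (simp add: abs_square_less_1)
    ultimately have "(t/2)^2 < (real j)^2" by linarith
    then show "0 < 1 - (t/2)^2 / (real j)^2" using j by (simp add: field_simps)
  qed
  have "\<bar>pi * (t/2)\<bar> < pi" using assms by (simp add: abs_mult)
  then have sin_half: "sin (pi * (t/2)) \<noteq> 0"
    using sin_eq_0_pi[of "pi * (t/2)"] False by (auto simp: abs_less_iff)
  have "(\<Prod>j=1..2*N. 1 - t^2 / (real j)^2) = P N * (\<Prod>k<N. 1 - t^2 / (real (2*k+1))^2)" for N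
    unfolding P_def prod_atLeast1_atMost_even_odd by (simp add: power_divide)
  then have "(\<lambda>N. \<Prod>k<N. 1 - t^2 / (real (2*k+1))^2) = (\<lambda>N. (\<Prod>j=1..2*N. 1 - t^2 / (real j)^2) / P N)"
    using P_pos by (simp add: fun_eq_iff less_imp_neq[symmetric])
  also have "\<dots> \<longlonglongrightarrow> (sin (pi * t) / (pi * t)) / (sin (pi * (t/2)) / (pi * (t/2)))"
    using sin_half False by (intro tendsto_divide sin_lim sin_half_lim) auto
  also have "(sin (pi * t) / (pi * t)) / (sin (pi * (t/2)) / (pi * (t/2))) = cos (pi * t / 2)"
    using sin_double[of "pi * (t/2)"] sin_half False by (simp add: field_simps)
  finally show ?thesis .
qed simp

lemma cos_pi_half_gt_zero:
  fixes t :: real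
  assumes "\<bar>t\<bar> < 1"
  shows "0 < cos (pi * t / 2)"
proof (rule cos_gt_zero_pi)
  have "\<bar>pi * t / 2\<bar> < pi / 2" using assms by (simp add: abs_mult)
  then show "- (pi / 2) < pi * t / 2" "pi * t / 2 < pi / 2" by linarith+
qed

lemma square_less_odd_square:
  fixes t :: real
  assumes "\<bar>t\<bar> < 1"
  shows "t^2 < (real (2*k+1))^2"
proof -
  have "t^2 < 1" using assms by (simp add: abs_square_less_1)
  also have "1 \<le> (real (2*k+1))^2" by simp
  finally show ?thesis .
qed

lemma ln_cos_sums:
  fixes t :: real
  assumes "\<bar>t\<bar> < 1"
  shows "(\<lambda>k. ln (1 - t^2 / (real (2*k+1))^2)) sums ln (cos (pi * t / 2))"
proof -
  have factor_pos: "0 < 1 - t^2 / (real (2*k+1))^2" for k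
    using square_less_odd_square[OF assms, of k] by (simp add: field_simps)
  have "(\<lambda>N. ln (\<Prod>k<N. 1 - t^2 / (real (2*k+1))^2)) \<longlonglongrightarrow> ln (cos (pi * t / 2))"
    using assms cos_pi_half_gt_zero[OF assms] by (intro tendsto_ln cos_product_formula_real) auto
  moreover have "ln (\<Prod>k<N. 1 - t^2 / (real (2*k+1))^2) = (\<Sum>k<N. ln (1 - t^2 / (real (2*k+1))^2))" for N
    using factor_pos by (intro ln_prod) (auto simp: less_imp_neq[symmetric])
  ultimately show ?thesis unfolding sums_def by simp
qed

lemma has_real_derivative_suminf:
  fixes f f' :: "nat \<Rightarrow> real \<Rightarrow> real" and M :: "nat \<Rightarrow> real"
  assumes deriv: "\<And>k x. \<bar>x\<bar> < b \<Longrightarrow> (f k has_real_derivative f' k x) (at x)"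
    and bound: "\<And>k x. \<bar>x\<bar> < b \<Longrightarrow> \<bar>f' k x\<bar> \<le> M k"
    and "summable M" and "summable (\<lambda>k. f k 0)" and "\<bar>t\<bar> < b"
  shows "summable (\<lambda>k. f k t)"
    and "((\<lambda>x. \<Sum>k. f k x) has_real_derivative (\<Sum>k. f' k t)) (at t)"
proof -
  define S where "S = ball (0::real) b"
  have S_iff: "x \<in> S \<longleftrightarrow> \<bar>x\<bar> < b" for x
    unfolding S_def by (simp add: dist_real_def)
  have convex: "convex S" unfolding S_def by simp
  have deriv_S: "(f k has_real_derivative f' k x) (at x within S)" if "x \<in> S" for k x
    using deriv S_iff that has_field_derivative_at_within by blast
  have uniform: "uniformly_convergent_on S (\<lambda>n x. \<Sum>k<n. f' k x)"
    using bound S_iff \<open>summable M\<close> by (intro Weierstrass_m_test') auto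
  have "0 \<in> S" "t \<in> interior S"
    using S_iff \<open>\<bar>t\<bar> < b\<close> by (auto simp: S_def)
  note series = has_field_derivative_series'[OF convex deriv_S uniform \<open>0 \<in> S\<close>
      \<open>summable (\<lambda>k. f k 0)\<close> \<open>t \<in> interior S\<close>]
  show "summable (\<lambda>k. f k t)" by (rule series(1))
  show "((\<lambda>x. \<Sum>k. f k x) has_real_derivative (\<Sum>k. f' k t)) (at t)" by (rule series(2))
qed

lemma odd_square_gap_bound:
  fixes x b :: real
  assumes "\<bar>x\<bar> < b" "b < 1"
  shows "\<bar>x\<bar> / ((real (2*k+1))^2 - x^2) \<le> 1 / (1 - b^2) / (real (k+1))^2"
proof -
  define n where "n = real (2*k+1)"
  have "1 \<le> n" and "real (k+1) \<le> n" unfolding n_def by auto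
  have "\<bar>x\<bar>^2 < b^2" and "b^2 < 1^2"
    using assms abs_ge_zero[of x] by (intro power_strict_mono; linarith)+
  then have x_b: "x^2 < b^2" and b_1: "b^2 < 1" by simp_all
  have "(1 - b^2) * (real (k+1))^2 \<le> (1 - b^2) * n^2"
    using \<open>real (k+1) \<le> n\<close> b_1 by (intro mult_left_mono power_mono) auto
  also have "\<dots> \<le> n^2 - x^2"
  proof -
    have "b^2 * 1 \<le> b^2 * n^2" using \<open>1 \<le> n\<close> by (intro mult_left_mono one_le_power) auto
    then show ?thesis using x_b by (simp add: algebra_simps)
  qed
  finally have gap: "(1 - b^2) * (real (k+1))^2 \<le> n^2 - x^2" .
  have "\<bar>x\<bar> \<le> 1" using assms by linarith
  then show ?thesis
    unfolding n_def[symmetric] divide_divide_eq_left using gap b_1 by (intro frac_le) auto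
qed

lemma summable_divide_Suc_squared:
  "summable (\<lambda>k. c / (real (k+1))^2)"
proof -
  have "summable (\<lambda>k. 1 / (real (k+1))^2)"
    using inverse_squares_sums by (simp add: sums_iff add.commute)
  from summable_mult[OF this, of c] show ?thesis by simp
qed

lemma pi_tan_partial_fractions:
  fixes t :: real
  assumes "\<bar>t\<bar> < 1"
  shows "(\<lambda>k. 4 * t / ((real (2*k+1))^2 - t^2)) sums (pi * tan (pi * t / 2))"
proof -
  define b where "b = (\<bar>t\<bar> + 1) / 2"
  have "\<bar>t\<bar> < b" "b < 1" using assms unfolding b_def by auto
  define f where "f k x = ln (1 - x^2 / (real (2*k+1))^2)" for k x
  define f' where "f' k x = - 2 * x / ((real (2*k+1))^2 - x^2)" for k x
  have deriv: "(f k has_real_derivative f' k x) (at x)" if "\<bar>x\<bar> < b" for k x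
  proof -
    have "x^2 < (real (2*k+1))^2"
      using that \<open>b < 1\<close> by (intro square_less_odd_square) auto
    then show ?thesis unfolding f_def f'_def
      by (auto intro!: derivative_eq_intros simp: divide_simps power2_eq_square)
  qed
  have bound: "\<bar>f' k x\<bar> \<le> 2 / (1 - b^2) / (real (k+1))^2" if "\<bar>x\<bar> < b" for k x
  proof -
    have "x^2 < (real (2*k+1))^2"
      using that \<open>b < 1\<close> by (intro square_less_odd_square) auto
    then have "\<bar>f' k x\<bar> = 2 * (\<bar>x\<bar> / ((real (2*k+1))^2 - x^2))"
      unfolding f'_def by (simp add: abs_mult)
    also have "\<dots> \<le> 2 * (1 / (1 - b^2) / (real (k+1))^2)"
      by (rule mult_left_mono[OF odd_square_gap_bound[OF that \<open>b < 1\<close>]]) simp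
    finally show ?thesis by simp
  qed
  have "((\<lambda>x. \<Sum>k. f k x) has_real_derivative (\<Sum>k. f' k t)) (at t)"
    by (rule has_real_derivative_suminf(2)[OF deriv bound summable_divide_Suc_squared _
          \<open>\<bar>t\<bar> < b\<close>]) (simp_all add: f_def)
  then have "((\<lambda>x. ln (cos (pi * x / 2))) has_real_derivative (\<Sum>k. f' k t)) (at t)"
  proof (rule has_field_derivative_transform_within_open)
    show "open (ball 0 1 :: real set)" "t \<in> ball 0 1" using assms by auto
  next
    fix x :: real assume "x \<in> ball 0 1"
    then have "\<bar>x\<bar> < 1" by (simp add: dist_real_def)
    then show "(\<Sum>k. f k x) = ln (cos (pi * x / 2))"
      unfolding f_def by (rule sums_unique[OF ln_cos_sums, symmetric])
  qed
  moreover have "((\<lambda>x. ln (cos (pi * x / 2))) has_real_derivative - (pi / 2) * tan (pi * t / 2)) (at t)"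
    using cos_pi_half_gt_zero[OF assms] by (auto intro!: derivative_eq_intros simp: tan_def field_simps)
  ultimately have "(\<Sum>k. f' k t) = - (pi / 2) * tan (pi * t / 2)"
    by (rule DERIV_unique)
  moreover have "summable (\<lambda>k. f' k t)"
    using bound[OF \<open>\<bar>t\<bar> < b\<close>]
    by (intro summable_comparison_test'[OF summable_divide_Suc_squared[of "2 / (1 - b^2)"]]) auto
  ultimately have "(\<lambda>k. f' k t) sums (- (pi / 2) * tan (pi * t / 2))"
    by (simp add: sums_iff)
  from sums_mult[OF this, of "-2"] show ?thesis
    unfolding f'_def by (simp add: field_simps)
qed

lemma Pfac_pos: "y < 1 \<Longrightarrow> 0 < Pfac r y"
  unfolding Pfac_def by simp

lemma Pfac_0 [simp]: "Pfac r 0 = 1"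
  unfolding Pfac_def by (simp add: power_0_left)

lemma mcos_0: "mcos r 0 = 1"
  unfolding mcos_def by simp

text \<open>\<open>P\<^sub>r\<close> is a Weierstrass primary factor: in its logarithmic derivative
  \<open>-1/(1-y) + 1 + y + \<dots> + y\<^sup>r\<^sup>-\<^sup>1\<close> the geometric sum cancels all but \<open>-y\<^sup>r/(1-y)\<close>.\<close>
lemma ln_Pfac_has_real_derivative:
  fixes y :: real
  assumes "y < 1"
  shows "((\<lambda>y. ln (Pfac r y)) has_real_derivative - (y^r) / (1 - y)) (at y)"
proof -
  have deriv: "((\<lambda>y. ln (1 - y) + (\<Sum>k=1..r. y^k / real k)) has_real_derivative
      - 1 / (1 - y) + (\<Sum>k=1..r. y^(k-1))) (at y)"
  proof (intro derivative_intros DERIV_sum)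
    show "((\<lambda>y. ln (1 - y)) has_real_derivative - 1 / (1 - y)) (at y)"
      using assms by (auto intro!: derivative_eq_intros)
    fix k assume "k \<in> {1..r}"
    then show "((\<lambda>y. y^k / real k) has_real_derivative y^(k-1)) (at y)"
      by (auto intro!: derivative_eq_intros)
  qed
  have geometric: "(\<Sum>k=1..r. y^(k-1)) = (1 - y^r) / (1 - y)"
    using assms by (simp add: sum.atLeast1_atMost_eq sum_gp_strict)
  have "- 1 / (1 - y) + (\<Sum>k=1..r. y^(k-1)) = - (y^r) / (1 - y)"
    unfolding geometric add_divide_distrib[symmetric] by simp
  moreover have "ln (1 - z) + (\<Sum>k=1..r. z^k / real k) = ln (Pfac r z)" if "z \<in> {..<1}" for z
    using that unfolding Pfac_def by (simp add: ln_mult)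
  ultimately show ?thesis
    using has_field_derivative_transform_within_open[OF deriv, of "{..<1}"] assms by simp
qed

definition ln_Pfac_pair :: "nat \<Rightarrow> real \<Rightarrow> real" where
  "ln_Pfac_pair r y = ln (Pfac r y) + (-1)^(r-1) * ln (Pfac r (-y))"

lemma ln_Pfac_pair_has_real_derivative:
  fixes y :: real
  assumes "\<bar>y\<bar> < 1" and "r \<ge> 1"
  shows "(ln_Pfac_pair r has_real_derivative - 2 * y^r / (1 - y^2)) (at y)"
proof -
  have "y < 1" "- y < 1" using assms by auto
  have "((\<lambda>y. ln (Pfac r (-y))) has_real_derivative - ((-y)^r) / (1 - (-y)) * (-1)) (at y)"
    by (rule DERIV_chain2[where g = "\<lambda>y. - y", OF ln_Pfac_has_real_derivative[OF \<open>- y < 1\<close>]])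
       (auto intro!: derivative_eq_intros)
  then have "(ln_Pfac_pair r has_real_derivative
      - (y^r) / (1 - y) + (-1)^(r-1) * ((-y)^r / (1 + y))) (at y)"
    unfolding ln_Pfac_pair_def
    by (intro DERIV_add DERIV_cmult ln_Pfac_has_real_derivative \<open>y < 1\<close>) simp
  moreover obtain m where "r = Suc m" using assms(2) by (cases r) auto
  then have "(-1)^(r-1) * (-y)^r = - (y^r)"
    by (simp add: power_minus[of y] mult.assoc[symmetric] power_add[symmetric] minus_one_power_iff)
  then have "- (y^r) / (1 - y) + (-1)^(r-1) * ((-y)^r / (1 + y)) = - 2 * y^r / (1 - y^2)"
    using \<open>y < 1\<close> \<open>- y < 1\<close> by (simp add: field_simps power2_eq_square)
  ultimately show ?thesis by simp
qed

definition mcos_log_term :: "nat \<Rightarrow> nat \<Rightarrow> real \<Rightarrow> real" where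
  "mcos_log_term r k x = (real (2*k+1) / 2)^(r-1) * ln_Pfac_pair r (x / real (2*k+1))"

lemma mcos_log_term_0 [simp]: "mcos_log_term r k 0 = 0"
  unfolding mcos_log_term_def ln_Pfac_pair_def by simp

lemma mcos_half_eq_prodinf_exp:
  fixes x :: real
  assumes "\<bar>x\<bar> < 1"
  shows "mcos r (x / 2) = (\<Prod>k. exp (mcos_log_term r k x))"
proof -
  have "(Pfac r ((x/2) / (real (2*k+1) / 2)) *
          Pfac r (- (x/2) / (real (2*k+1) / 2)) powr ((-1) ^ (r - 1)))
          powr ((real (2*k+1) / 2) ^ (r - 1)) = exp (mcos_log_term r k x)" for k
  proof -
    define n where "n = real (2*k+1)"
    have "\<bar>x / n\<bar> < 1" using assms by (simp add: n_def abs_div field_simps)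
    then have "0 < Pfac r (x / n)" "0 < Pfac r (- x / n)"
      unfolding abs_less_iff by (auto intro!: Pfac_pos)
    then show ?thesis
      unfolding mcos_log_term_def ln_Pfac_pair_def n_def[symmetric]
      by (simp add: powr_def ln_mult)
  qed
  then show ?thesis unfolding mcos_def by simp
qed

lemma mcos_log_term_has_real_derivative:
  fixes x :: real
  assumes "\<bar>x\<bar> < 1" and "r \<ge> 1"
  shows "(mcos_log_term r k has_real_derivative
           - (1 / 2^r) * x^(r-1) * (4 * x / ((real (2*k+1))^2 - x^2))) (at x)"
proof -
  define n where "n = real (2*k+1)"
  have "1 \<le> n" unfolding n_def by simp
  have "x^2 < n^2" unfolding n_def using square_less_odd_square[OF assms(1)] .
  have "\<bar>x / n\<bar> < 1" using assms \<open>1 \<le> n\<close> by (simp add: abs_div field_simps)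
  have "((\<lambda>x. (n/2)^(r-1) * ln_Pfac_pair r (x / n)) has_real_derivative
      (n/2)^(r-1) * (- 2 * (x/n)^r / (1 - (x/n)^2) * (1/n))) (at x)"
    using \<open>1 \<le> n\<close>
    by (intro DERIV_cmult DERIV_chain2[where g = "\<lambda>x. x / n",
          OF ln_Pfac_pair_has_real_derivative[OF \<open>\<bar>x / n\<bar> < 1\<close> assms(2)]])
       (auto intro!: derivative_eq_intros)
  moreover obtain m where "r = Suc m" using assms(2) by (cases r) auto
  then have "(n/2)^(r-1) * (- 2 * (x/n)^r / (1 - (x/n)^2) * (1/n)) =
      - (1 / 2^r) * x^(r-1) * (4 * x / (n^2 - x^2))"
    using \<open>1 \<le> n\<close> \<open>x^2 < n^2\<close> by (simp add: power_divide field_simps power2_eq_square)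
  ultimately show ?thesis
    unfolding mcos_log_term_def n_def[symmetric] by simp
qed

lemma ln_mcos_half_has_real_derivative:
  fixes t :: real
  assumes "\<bar>t\<bar> < 1" and "r \<ge> 1"
  shows "((\<lambda>x. ln (mcos r (x / 2))) has_real_derivative
           - (1 / 2^r) * (pi * t^(r-1) * tan (pi * t / 2))) (at t)"
proof -
  define b where "b = (\<bar>t\<bar> + 1) / 2"
  have "\<bar>t\<bar> < b" "b < 1" using assms unfolding b_def by auto
  define g' where "g' k x = - (1 / 2^r) * x^(r-1) * (4 * x / ((real (2*k+1))^2 - x^2))" for k x
  have deriv: "(mcos_log_term r k has_real_derivative g' k x) (at x)" if "\<bar>x\<bar> < b" for k x
    unfolding g'_def using that \<open>b < 1\<close> assms(2)
    by (intro mcos_log_term_has_real_derivative) auto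
  have bound: "\<bar>g' k x\<bar> \<le> 4 / 2^r / (1 - b^2) / (real (k+1))^2" if "\<bar>x\<bar> < b" for k x
  proof -
    have gap: "x^2 < (real (2*k+1))^2"
      using that \<open>b < 1\<close> by (intro square_less_odd_square) auto
    then have "\<bar>g' k x\<bar> = (4 / 2^r) * (\<bar>x\<bar>^(r-1) * (\<bar>x\<bar> / ((real (2*k+1))^2 - x^2)))"
      unfolding g'_def by (simp add: abs_mult power_abs)
    also have "\<dots> \<le> (4 / 2^r) * (1 * (1 / (1 - b^2) / (real (k+1))^2))"
      using that \<open>b < 1\<close> gap odd_square_gap_bound[OF that \<open>b < 1\<close>]
      by (intro mult_left_mono mult_mono power_le_one) auto
    finally show ?thesis by simp
  qed
  have summable: "summable (\<lambda>k. mcos_log_term r k x)" if "\<bar>x\<bar> < b" for x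
    by (rule has_real_derivative_suminf(1)[OF deriv bound summable_divide_Suc_squared _
          that]) simp_all
  have "((\<lambda>x. \<Sum>k. mcos_log_term r k x) has_real_derivative (\<Sum>k. g' k t)) (at t)"
    by (rule has_real_derivative_suminf(2)[OF deriv bound summable_divide_Suc_squared _
          \<open>\<bar>t\<bar> < b\<close>]) simp_all
  then have "((\<lambda>x. ln (mcos r (x / 2))) has_real_derivative (\<Sum>k. g' k t)) (at t)"
  proof (rule has_field_derivative_transform_within_open)
    show "open (ball 0 b :: real set)" "t \<in> ball 0 b"
      using \<open>\<bar>t\<bar> < b\<close> by auto
  next
    fix x :: real assume "x \<in> ball 0 b"
    then have "\<bar>x\<bar> < b" by (simp add: dist_real_def)
    then show "(\<Sum>k. mcos_log_term r k x) = ln (mcos r (x / 2))"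
      using \<open>b < 1\<close> by (simp add: mcos_half_eq_prodinf_exp prodinf_exp[OF summable])
  qed
  moreover have "(\<lambda>k. g' k t) sums (- (1 / 2^r) * t^(r-1) * (pi * tan (pi * t / 2)))"
    unfolding g'_def by (intro sums_mult pi_tan_partial_fractions assms(1))
  ultimately show ?thesis by (simp add: sums_iff mult_ac)
qed

theorem proposition3p3:
  fixes x :: real and r :: nat
  assumes "0 \<le> x" and "x < 1" and "r \<ge> 2"
  shows "ln (mcos r (x / 2)) =
    - (1 / 2 ^ r) * integral {0..x} (\<lambda>t. pi * t ^ (r - 1) * tan (pi * t / 2))"
proof -
  have "((\<lambda>t. - (1 / 2^r) * (pi * t^(r-1) * tan (pi * t / 2))) has_integral
      ln (mcos r (x / 2)) - ln (mcos r (0 / 2))) {0..x}"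
  proof (rule fundamental_theorem_of_calculus)
    fix t assume "t \<in> {0..x}"
    then have "\<bar>t\<bar> < 1" using assms by auto
    from ln_mcos_half_has_real_derivative[OF this, of r] assms(3)
    show "((\<lambda>x. ln (mcos r (x / 2))) has_vector_derivative
        - (1 / 2^r) * (pi * t^(r-1) * tan (pi * t / 2))) (at t within {0..x})"
      by (auto simp: has_real_derivative_iff_has_vector_derivative[symmetric]
          intro: has_field_derivative_at_within)
  qed (rule assms(1))
  from integral_unique[OF this] show ?thesis by (simp add: mcos_0)
qed

end
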